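(* Let $f:\mathbb R^n\to\mathbb R$ be convex, differentiable and $L$-Lipschitz smooth, $g:\mathbb R^n\to\mathbb R\cup\{+\infty\}$ proper, closed and convex, $F=f+g$. Let $(\alpha_k)_{k\ge0}\subseteq(0,1]$, $(B_k)_{k\ge0}\subseteq(0,\infty)$, $(\rho_k)_{k\ge0}\subseteq[0,\infty)$, $(\epsilon_k)_{k\ge0}\subseteq(0,\infty)$, and $L_k=B_k+\rho_k$. Given $x_{-1},x^\circ_{-1}\in\mathbb R^n$, let $(y_k,x_k,x^\circ_k)_{k\ge0}$ satisfy for all $k\ge0$: $y_k=\alpha_kx^\circ_{k-1}+(1-\alpha_k)x_{k-1}$; $x_k\approx_{\epsilon_k}T_{L_k}(y_k)$; $D_f(x_k,y_k)\le\frac{B_k}2\|x_k-y_k\|^2$; $x^\circ_k=x_{k-1}+\alpha_k^{-1}(x_k-x_{k-1})$. Then for any $\bar x\in\mathbb R^n$ and all $k\ge0$, $$\frac{\rho_k}2\|x_k-y_k\|^2-\epsilon_k\le(1-\alpha_k)(F(x_{k-1})-F(\bar x))+F(\bar x)-F(x_k)+\frac{\alpha_k^2L_k}2\|\bar x-x^\circ_{k-1}\|^2-\frac{\alpha_k^2L_k}2\|\bar x-x^\circ_k\|^2.$$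
   Context: $D_f(u,w)=f(u)-f(w)-\langle\nabla f(w),u-w\rangle$; $L$-Lipschitz smooth means $D_f(u,w)\le\frac L2\|u-w\|^2$ for all $u,w$. For proper $h$, $\epsilon\ge0$: $\partial_\epsilon h(\bar x)=\{v:\langle v,u-\bar x\rangle\le h(u)-h(\bar x)+\epsilon\ \forall u\}$ for $\bar x\in\operatorname{dom}h$, $\emptyset$ otherwise. $\tilde x\approx_\epsilon T_\rho(x)$ means $\mathbf 0\in\nabla f(x)-\rho(x-\tilde x)+\partial_\epsilon g(\tilde x)$. *)

theory Defs
  imports "HOL-Analysis.Analysis" "HOL-Library.Extended_Real"
begin

definition grad :: "('a::euclidean_space \<Rightarrow> real) \<Rightarrow> 'a \<Rightarrow> 'a" where
  "grad f w = (THE v. (f has_derivative (\<lambda>h. inner v h)) (at w))"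

definition bregman :: "('a::euclidean_space \<Rightarrow> real) \<Rightarrow> 'a \<Rightarrow> 'a \<Rightarrow> real" where
  "bregman f u w = f u - f w - inner (grad f w) (u - w)"

text \<open>Functions into \<real> \<union> {+\<infinity>}, modelled as ereal-valued functions never equal to -\<infinity>.\<close>
definition proper_fun :: "('a \<Rightarrow> ereal) \<Rightarrow> bool" where
  "proper_fun g \<longleftrightarrow> (\<exists>x. g x < \<infinity>) \<and> (\<forall>x. g x > -\<infinity>)"

definition convex_efun :: "('a::real_vector \<Rightarrow> ereal) \<Rightarrow> bool" where
  "convex_efun g \<longleftrightarrow> (\<forall>x y t. 0 \<le> t \<and> t \<le> 1 \<longrightarrow>
      g ((1 - t) *\<^sub>R x + t *\<^sub>R y) \<le> ereal (1 - t) * g x + ereal t * g y)"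

definition closed_efun :: "('a::euclidean_space \<Rightarrow> ereal) \<Rightarrow> bool" where
  "closed_efun g \<longleftrightarrow> closed {(x, r::real). g x \<le> ereal r}"

definition eps_subdiff :: "real \<Rightarrow> ('a::euclidean_space \<Rightarrow> ereal) \<Rightarrow> 'a \<Rightarrow> 'a set" where
  "eps_subdiff \<epsilon> h xb = (if h xb < \<infinity> then
      {v. \<forall>u. ereal (inner v (u - xb)) \<le> h u - h xb + ereal \<epsilon>} else {})"

text \<open>xt \<approx>_\<epsilon> T_\<rho>(x):  0 \<in> \<nabla>f(x) - \<rho>(x - xt) + \<partial>_\<epsilon> g(xt).\<close>
definition approx_prox :: "('a::euclidean_space \<Rightarrow> real) \<Rightarrow> ('a \<Rightarrow> ereal) \<Rightarrow> real \<Rightarrow> real \<Rightarrow> 'a \<Rightarrow> 'a \<Rightarrow> bool" where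
  "approx_prox f g \<epsilon> \<rho> x xt \<longleftrightarrow>
     (\<exists>v \<in> eps_subdiff \<epsilon> g xt. 0 = grad f x - \<rho> *\<^sub>R (x - xt) + v)"

end

theory Submission
  imports Defs
begin

text \<open>Put \<open>z = x\<^sub>k\<close>, \<open>y = y\<^sub>k\<close> and \<open>u = (1 - \<alpha>\<^sub>k) x\<^sub>k\<^sub>-\<^sub>1 + \<alpha>\<^sub>k xbar\<close>. The \<open>\<epsilon>\<close>-subgradient
  inequality of g at z and the gradient inequality of f at y, both tested at u, together with
  the descent condition \<open>D\<^sub>f(z, y) \<le> B\<^sub>k/2 \<parallel>z - y\<parallel>\<^sup>2\<close> give
  \<open>F z \<le> F u + B\<^sub>k/2 \<parallel>z - y\<parallel>\<^sup>2 - L\<^sub>k \<langle>y - z, u - z\<rangle> + \<epsilon>\<^sub>k\<close>, and convexity bounds \<open>F u\<close> by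
  \<open>(1 - \<alpha>\<^sub>k) F x\<^sub>k\<^sub>-\<^sub>1 + \<alpha>\<^sub>k F xbar\<close>. The momentum update makes \<open>y - z\<close> and \<open>u - z\<close> equal to
  \<open>\<alpha>\<^sub>k\<close> times \<open>xo\<^sub>k\<^sub>-\<^sub>1 - xo\<^sub>k\<close> and \<open>xbar - xo\<^sub>k\<close>, so by the three-point identity the inner
  product is \<open>L\<^sub>k/2 \<parallel>z - y\<parallel>\<^sup>2\<close> plus the telescoping difference of the terms
  \<open>\<alpha>\<^sub>k\<^sup>2 L\<^sub>k/2 \<parallel>xbar - xo\<parallel>\<^sup>2\<close>; what remains of \<open>B\<^sub>k/2 \<parallel>z - y\<parallel>\<^sup>2\<close> is \<open>-\<rho>\<^sub>k/2 \<parallel>z - y\<parallel>\<^sup>2\<close>.\<close>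

lemma has_derivative_grad:
  fixes f :: "'a::euclidean_space \<Rightarrow> real"
  assumes "f differentiable (at w)"
  shows "(f has_derivative (\<lambda>h. grad f w \<bullet> h)) (at w)"
proof -
  obtain D where D: "(f has_derivative D) (at w)"
    using assms differentiable_def by blast
  define v where "v = adjoint D 1"
  have "D = (\<lambda>h. v \<bullet> h)"
    using adjoint_works[OF has_derivative_linear[OF D], of _ 1]
    by (auto simp: v_def inner_commute)
  with D have v: "(f has_derivative (\<lambda>h. v \<bullet> h)) (at w)"
    by simp
  have "grad f w = v"
    unfolding grad_def
  proof (rule the_equality)
    fix v' assume "(f has_derivative (\<lambda>h. v' \<bullet> h)) (at w)"
    with v have "(\<lambda>h. v' \<bullet> h) = (\<lambda>h. v \<bullet> h)"
      using has_derivative_unique by blast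
    then show "v' = v"
      by (metis vector_eq_rdot)
  qed (rule v)
  with v show ?thesis
    by simp
qed

lemma convex_on_grad_inequality:
  fixes f :: "'a::euclidean_space \<Rightarrow> real"
  assumes convex: "convex_on UNIV f" and diff: "f differentiable_on UNIV"
  shows "f y + grad f y \<bullet> (u - y) \<le> f u"
proof -
  define \<phi> where "\<phi> t = f (y + t *\<^sub>R (u - y))" for t :: real
  have "convex_on UNIV \<phi>"
  proof (rule convex_onI)
    fix t s1 s2 :: real
    assume "0 < t" "t < 1"
    then have "f ((1 - t) *\<^sub>R (y + s1 *\<^sub>R (u - y)) + t *\<^sub>R (y + s2 *\<^sub>R (u - y)))
        \<le> (1 - t) * \<phi> s1 + t * \<phi> s2"
      unfolding \<phi>_def by (intro convex_onD[OF convex]) auto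
    moreover have "(1 - t) *\<^sub>R (y + s1 *\<^sub>R (u - y)) + t *\<^sub>R (y + s2 *\<^sub>R (u - y))
        = y + ((1 - t) *\<^sub>R s1 + t *\<^sub>R s2) *\<^sub>R (u - y)"
      by (simp add: algebra_simps)
    ultimately show "\<phi> ((1 - t) *\<^sub>R s1 + t *\<^sub>R s2) \<le> (1 - t) * \<phi> s1 + t * \<phi> s2"
      by (simp add: \<phi>_def)
  qed simp
  moreover have "(\<phi> has_field_derivative grad f y \<bullet> (u - y)) (at 0)"
  proof -
    have line: "((\<lambda>t. y + t *\<^sub>R (u - y)) has_derivative (\<lambda>t. t *\<^sub>R (u - y))) (at 0)"
      by (auto intro!: derivative_eq_intros)
    have "(f has_derivative (\<lambda>h. grad f y \<bullet> h)) (at (y + 0 *\<^sub>R (u - y)))"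
      using diff has_derivative_grad by (auto simp: differentiable_on_def)
    from has_derivative_compose[OF line this]
    have "(\<phi> has_derivative (\<lambda>t. grad f y \<bullet> (t *\<^sub>R (u - y)))) (at 0)"
      unfolding \<phi>_def .
    then show ?thesis
      by (simp add: has_field_derivative_def mult_commute_abs)
  qed
  ultimately have "\<phi> 1 - \<phi> 0 \<ge> grad f y \<bullet> (u - y) * (1 - 0)"
    by (intro convex_on_imp_above_tangent) auto
  then show ?thesis
    by (simp add: \<phi>_def)
qed

lemma approx_prox_dom:
  assumes "approx_prox f g \<epsilon> \<rho> y z"
  shows "g z < \<infinity>"
  using assms unfolding approx_prox_def eps_subdiff_def by (auto split: if_splits)

lemma approx_prox_descent:
  fixes f :: "'a::euclidean_space \<Rightarrow> real" and g :: "'a \<Rightarrow> ereal"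
  assumes f_convex: "convex_on UNIV f" and f_diff: "f differentiable_on UNIV"
    and g_proper: "proper_fun g"
    and prox: "approx_prox f g \<epsilon> \<rho> y z"
    and breg: "bregman f z y \<le> B / 2 * (norm (z - y))\<^sup>2"
  shows "ereal (f z) + g z
    \<le> ereal (f u) + g u + ereal (B / 2 * (norm (z - y))\<^sup>2 - \<rho> * ((y - z) \<bullet> (u - z)) + \<epsilon>)"
proof -
  obtain v where v_sub: "v \<in> eps_subdiff \<epsilon> g z" and v_eq: "v = \<rho> *\<^sub>R (y - z) - grad f y"
    using prox unfolding approx_prox_def by (metis add_diff_cancel_left' diff_zero minus_diff_eq)
  have g_not_minf: "g x \<noteq> -\<infinity>" for x
    using g_proper unfolding proper_fun_def by auto
  obtain gz where gz: "g z = ereal gz"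
    using approx_prox_dom[OF prox] g_not_minf[of z] by (cases "g z") auto
  show ?thesis
  proof (cases "g u")
    case (real gu)
    have "ereal (v \<bullet> (u - z)) \<le> g u - g z + ereal \<epsilon>"
      using v_sub unfolding eps_subdiff_def by (auto split: if_splits)
    then have "v \<bullet> (u - z) \<le> gu - gz + \<epsilon>"
      using gz real by simp
    moreover have "f y + grad f y \<bullet> (u - y) \<le> f u"
      by (rule convex_on_grad_inequality[OF f_convex f_diff])
    moreover have "f z - f y - grad f y \<bullet> (z - y) \<le> B / 2 * (norm (z - y))\<^sup>2"
      using breg unfolding bregman_def .
    moreover have "grad f y \<bullet> (u - y) = grad f y \<bullet> (u - z) + grad f y \<bullet> (z - y)"
      by (simp add: inner_diff_right)
    ultimately show ?thesis
      using gz real by (simp add: v_eq inner_diff_left)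
  qed (use g_not_minf in auto)
qed

lemma convex_efun_add_convex_on:
  fixes f :: "'a::real_vector \<Rightarrow> real"
  assumes "convex_on UNIV f" and "convex_efun g"
  shows "convex_efun (\<lambda>x. ereal (f x) + g x)"
  unfolding convex_efun_def
proof safe
  fix x y :: 'a and t :: real
  assume t: "0 \<le> t" "t \<le> 1"
  have "ereal (f ((1 - t) *\<^sub>R x + t *\<^sub>R y)) + g ((1 - t) *\<^sub>R x + t *\<^sub>R y)
      \<le> ereal ((1 - t) * f x + t * f y) + (ereal (1 - t) * g x + ereal t * g y)"
    using t assms convex_onD[of UNIV f t x y] unfolding convex_efun_def
    by (intro add_mono) auto
  also have "\<dots> = ereal (1 - t) * (ereal (f x) + g x) + ereal t * (ereal (f y) + g y)"
  proof -
    have distrib: "ereal c * (ereal r + e) = ereal (c * r) + ereal c * e" for c r :: real and e :: ereal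
      by (cases e) (auto simp: distrib_left)
    show ?thesis
      unfolding distrib by (simp only: plus_ereal.simps(1)[symmetric] add_ac)
  qed
  finally show "ereal (f ((1 - t) *\<^sub>R x + t *\<^sub>R y)) + g ((1 - t) *\<^sub>R x + t *\<^sub>R y)
      \<le> ereal (1 - t) * (ereal (f x) + g x) + ereal t * (ereal (f y) + g y)" .
qed

lemma convex_efun_le_affine_combination:
  fixes F :: "'a::real_vector \<Rightarrow> ereal"
  assumes "convex_efun F" and "0 \<le> a" "a \<le> 1" and "\<bar>F w\<bar> \<noteq> \<infinity>"
  shows "F ((1 - a) *\<^sub>R x + a *\<^sub>R w) \<le> ereal (1 - a) * (F x - F w) + F w"
proof -
  have "F ((1 - a) *\<^sub>R x + a *\<^sub>R w) \<le> ereal (1 - a) * F x + ereal a * F w"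
    using assms unfolding convex_efun_def by blast
  also have "\<dots> = ereal (1 - a) * (F x - F w) + F w"
    using assms by (cases "F x"; cases "F w") (auto simp: algebra_simps)
  finally show ?thesis .
qed

lemma approx_prox_step_estimate:
  fixes f :: "'a::euclidean_space \<Rightarrow> real" and g :: "'a \<Rightarrow> ereal"
  assumes f_convex: "convex_on UNIV f" and f_diff: "f differentiable_on UNIV"
    and g_proper: "proper_fun g" and g_convex: "convex_efun g"
    and prox: "approx_prox f g \<epsilon> \<rho> y z"
    and breg: "bregman f z y \<le> B / 2 * (norm (z - y))\<^sup>2"
    and w_dom: "g w < \<infinity>" and a: "0 \<le> a" "a \<le> 1"
  shows "ereal (f z) + g z
    \<le> ereal (1 - a) * ((ereal (f p) + g p) - (ereal (f w) + g w)) + (ereal (f w) + g w)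
      + ereal (B / 2 * (norm (z - y))\<^sup>2 - \<rho> * ((y - z) \<bullet> ((1 - a) *\<^sub>R p + a *\<^sub>R w - z)) + \<epsilon>)"
proof -
  have "\<bar>ereal (f w) + g w\<bar> \<noteq> \<infinity>"
    using w_dom g_proper unfolding proper_fun_def by (cases "g w") auto
  from convex_efun_le_affine_combination[OF convex_efun_add_convex_on[OF f_convex g_convex] a this]
  show ?thesis
    using approx_prox_descent[OF f_convex f_diff g_proper prox breg, of "(1 - a) *\<^sub>R p + a *\<^sub>R w"]
    by (auto intro: order_trans add_right_mono)
qed

text \<open>With \<open>y - z = a (o\<^sub>1 - o\<^sub>2)\<close> and \<open>u - z = a (w - o\<^sub>2)\<close>,
  this is the three-point identity for \<open>o\<^sub>1, o\<^sub>2, w\<close> scaled by \<open>a\<^sup>2\<close>.\<close>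
lemma momentum_inner_identity:
  fixes p o\<^sub>1 o\<^sub>2 w y z u :: "'a::real_inner"
  assumes "a \<noteq> 0"
    and "y = a *\<^sub>R o\<^sub>1 + (1 - a) *\<^sub>R p"
    and "o\<^sub>2 = p + (1 / a) *\<^sub>R (z - p)"
    and "u = (1 - a) *\<^sub>R p + a *\<^sub>R w"
  shows "2 * ((y - z) \<bullet> (u - z)) = (norm (z - y))\<^sup>2 + a\<^sup>2 * ((norm (w - o\<^sub>2))\<^sup>2 - (norm (w - o\<^sub>1))\<^sup>2)"
proof -
  have "a *\<^sub>R o\<^sub>2 = a *\<^sub>R p + (z - p)"
    using assms(1,3) by (simp add: scaleR_add_right)
  then have "z = (1 - a) *\<^sub>R p + a *\<^sub>R o\<^sub>2"
    by (simp add: algebra_simps)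
  then have "y - z = a *\<^sub>R (o\<^sub>1 - o\<^sub>2)" and "u - z = a *\<^sub>R (w - o\<^sub>2)"
    unfolding assms(2,4) by (simp_all add: algebra_simps)
  then have inner_eq: "2 * ((y - z) \<bullet> (u - z)) = a\<^sup>2 * (2 * ((o\<^sub>1 - o\<^sub>2) \<bullet> (w - o\<^sub>2)))"
    and norm_eq: "(norm (z - y))\<^sup>2 = a\<^sup>2 * (norm (o\<^sub>1 - o\<^sub>2))\<^sup>2"
    by (simp_all add: norm_minus_commute[of z] power2_eq_square)
  have three_point: "2 * ((o\<^sub>1 - o\<^sub>2) \<bullet> (w - o\<^sub>2))
      = (norm (o\<^sub>1 - o\<^sub>2))\<^sup>2 + (norm (w - o\<^sub>2))\<^sup>2 - (norm (w - o\<^sub>1))\<^sup>2"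
    using dot_norm_neg[of "o\<^sub>1 - o\<^sub>2" "w - o\<^sub>2"] by (simp add: norm_minus_commute)
  show ?thesis
    unfolding inner_eq norm_eq three_point by (simp add: algebra_simps)
qed

lemma ereal_le_add_real_rearrange:
  assumes "\<bar>X\<bar> \<noteq> \<infinity>" and "X \<le> S + ereal (c\<^sub>1 - c\<^sub>2 - t)"
  shows "ereal t \<le> S - X + ereal c\<^sub>1 - ereal c\<^sub>2"
  using assms by (cases X; cases S) auto

text \<open>The sequences are shifted by one: \<open>x (Suc j)\<close> is \<open>x\<^sub>j\<close> and \<open>xo j\<close> is the paper's \<open>x\<degree>\<^sub>j\<^sub>-\<^sub>1\<close>.
  Only the line-search condition on \<open>B\<^sub>k\<close> enters the estimate.\<close>

theorem lemma3p2:
  fixes f :: "real ^ 'n \<Rightarrow> real" and g :: "real ^ 'n \<Rightarrow> ereal"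
    and L :: real and \<alpha> B \<rho> \<epsilon> :: "nat \<Rightarrow> real"
    and x xo y :: "nat \<Rightarrow> real ^ 'n" and xbar :: "real ^ 'n" and k :: nat
  assumes f_convex: "convex_on UNIV f"
    and f_diff: "f differentiable_on UNIV"
    and f_smooth: "\<forall>u w. bregman f u w \<le> L / 2 * (norm (u - w))\<^sup>2"
    and g_proper: "proper_fun g" and g_closed: "closed_efun g" and g_convex: "convex_efun g"
    and alpha: "\<forall>j. 0 < \<alpha> j \<and> \<alpha> j \<le> 1"
    and B_pos: "\<forall>j. 0 < B j"
    and rho_nn: "\<forall>j. 0 \<le> \<rho> j"
    and eps_pos: "\<forall>j. 0 < \<epsilon> j"
    and y_def: "\<forall>j. y j = \<alpha> j *\<^sub>R xo j + (1 - \<alpha> j) *\<^sub>R x j"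
    and x_approx: "\<forall>j. approx_prox f g (\<epsilon> j) (B j + \<rho> j) (y j) (x (Suc j))"
    and x_breg: "\<forall>j. bregman f (x (Suc j)) (y j) \<le> B j / 2 * (norm (x (Suc j) - y j))\<^sup>2"
    and xo_def: "\<forall>j. xo (Suc j) = x j + (1 / \<alpha> j) *\<^sub>R (x (Suc j) - x j)"
    and xbar_dom: "g xbar < \<infinity>"
  shows "ereal (\<rho> k / 2 * (norm (x (Suc k) - y k))\<^sup>2 - \<epsilon> k)
    \<le> ereal (1 - \<alpha> k) * ((ereal (f (x k)) + g (x k)) - (ereal (f xbar) + g xbar))
       + (ereal (f xbar) + g xbar) - (ereal (f (x (Suc k))) + g (x (Suc k)))
       + ereal (\<alpha> k ^ 2 * (B k + \<rho> k) / 2 * (norm (xbar - xo k))\<^sup>2)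
       - ereal (\<alpha> k ^ 2 * (B k + \<rho> k) / 2 * (norm (xbar - xo (Suc k)))\<^sup>2)"
proof -
  define Lk where "Lk = B k + \<rho> k"
  define u where "u = (1 - \<alpha> k) *\<^sub>R x k + \<alpha> k *\<^sub>R xbar"
  have a: "0 < \<alpha> k" "\<alpha> k \<le> 1"
    using alpha by auto
  have step: "ereal (f (x (Suc k))) + g (x (Suc k))
      \<le> ereal (1 - \<alpha> k) * ((ereal (f (x k)) + g (x k)) - (ereal (f xbar) + g xbar)) + (ereal (f xbar) + g xbar)
        + ereal (B k / 2 * (norm (x (Suc k) - y k))\<^sup>2 - Lk * ((y k - x (Suc k)) \<bullet> (u - x (Suc k))) + \<epsilon> k)"
    unfolding Lk_def u_def using x_approx x_breg xbar_dom a
    by (intro approx_prox_step_estimate[OF f_convex f_diff g_proper g_convex]) auto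
  have "2 * ((y k - x (Suc k)) \<bullet> (u - x (Suc k))) = (norm (x (Suc k) - y k))\<^sup>2
      + \<alpha> k ^ 2 * ((norm (xbar - xo (Suc k)))\<^sup>2 - (norm (xbar - xo k))\<^sup>2)"
    using a y_def xo_def u_def by (intro momentum_inner_identity) auto
  then have gap: "B k / 2 * (norm (x (Suc k) - y k))\<^sup>2 - Lk * ((y k - x (Suc k)) \<bullet> (u - x (Suc k))) + \<epsilon> k
      = \<alpha> k ^ 2 * Lk / 2 * (norm (xbar - xo k))\<^sup>2 - \<alpha> k ^ 2 * Lk / 2 * (norm (xbar - xo (Suc k)))\<^sup>2
        - (\<rho> k / 2 * (norm (x (Suc k) - y k))\<^sup>2 - \<epsilon> k)"
    unfolding Lk_def by algebra
  have "\<bar>ereal (f (x (Suc k))) + g (x (Suc k))\<bar> \<noteq> \<infinity>"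
    using approx_prox_dom[OF x_approx[rule_format, of k]] g_proper unfolding proper_fun_def
    by (cases "g (x (Suc k))") auto
  from ereal_le_add_real_rearrange[OF this step[unfolded gap]]
  show ?thesis
    unfolding Lk_def .
qed

end
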